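(* Let $n\geq4$, $k\geq3$, and consider the single braided Coxeter group $W^n_k$ with generators $s_1,\dots,s_n$. For all $\lambda\in\mathbb{N}_0$ and $1\le r\le n$, the element represented by $\mathbf{s}=(s_1s_2\cdots s_n)^\lambda s_1\cdots s_r$ satisfies \[ l_R(\omega(\mathbf{s}))\leq \lambda(n-2)+r-2\cdot\mathbf{1}_{(\lambda+\mathbf{1}_{r\geq 2})\geq k}\cdot\left(1+\left\lfloor\frac{\lambda-k+\mathbf{1}_{r\geq2}}{k-1}\right\rfloor\right). \]
   Context: $W^n_k=\langle s_1,\dots,s_n\mid s_i^2=(s_is_j)^{k}=1\ \forall i\neq j\rangle$. $\omega$ maps a word over $\{s_1,\dots,s_n\}$ to the element it represents. $l_R$ is the reflection length: minimal number of reflections (conjugates of generators) whose product is the element. For a condition $P$, $\mathbf{1}_P$ equals $1$ if $P$ holds and $0$ otherwise. *)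

theory Defs
  imports Main
begin

text \<open>Words over the generators s_1..s_n are lists of indices in {1..n}.
  The group W^n_k is the quotient of such words by the congruence generated by
  the relators s_i s_i and (s_i s_j)^k (i \<noteq> j).\<close>

definition relator :: "nat \<Rightarrow> nat \<Rightarrow> nat list \<Rightarrow> bool" where
  "relator n k r \<longleftrightarrow>
     (\<exists>i\<in>{1..n}. r = [i, i]) \<or>
     (\<exists>i\<in>{1..n}. \<exists>j\<in>{1..n}. i \<noteq> j \<and> r = concat (replicate k [i, j]))"

text \<open>wequiv n k u v: the words u and v represent the same element of W^n_k,
  i.e. omega u = omega v.\<close>
inductive wequiv :: "nat \<Rightarrow> nat \<Rightarrow> nat list \<Rightarrow> nat list \<Rightarrow> bool" for n k where
  wrefl: "wequiv n k u u"
| wsym: "wequiv n k u v \<Longrightarrow> wequiv n k v u"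
| wtrans: "wequiv n k u v \<Longrightarrow> wequiv n k v w \<Longrightarrow> wequiv n k u w"
| wrel: "relator n k r \<Longrightarrow> wequiv n k (u @ r @ v) (u @ v)"

definition gen_word :: "nat \<Rightarrow> nat list \<Rightarrow> bool" where
  "gen_word n w \<longleftrightarrow> set w \<subseteq> {1..n}"

text \<open>A word representing a reflection, i.e. a conjugate w s_i w^{-1} of a generator
  (note w^{-1} = rev w since generators are involutions).\<close>
definition refl_word :: "nat \<Rightarrow> nat list \<Rightarrow> bool" where
  "refl_word n t \<longleftrightarrow> (\<exists>w i. gen_word n w \<and> i \<in> {1..n} \<and> t = w @ [i] @ rev w)"

definition refl_len :: "nat \<Rightarrow> nat \<Rightarrow> nat list \<Rightarrow> nat" where
  "refl_len n k w = (LEAST m. \<exists>ts. length ts = m \<and> (\<forall>t\<in>set ts. refl_word n t)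
                                 \<and> wequiv n k (concat ts) w)"

end

theory Submission
  imports Defs
begin

text \<open>Write the word cyclically as s_{p+1} s_{p+2} ... (indices mod n). Its first letter a
  recurs n letters later, so the word is a conjugate a X a followed by the remaining letters;
  recursing on X, each period of n letters costs only n - 2 reflections.
  If r \<ge> 2 and at least k - 1 further periods follow, the first two letters a b recur
  k times in total; the braid relation (a b)^k = 1 then lets the k - 1 inner copies of a b
  and the outer conjugating pair a b ... b a be discarded, saving two reflections per block
  of k - 1 periods.\<close>

lemma wequiv_context: "wequiv n k u v \<Longrightarrow> wequiv n k (x @ u @ y) (x @ v @ y)"
proof (induction rule: wequiv.induct)
  case (wrefl u) then show ?case by (rule wequiv.wrefl)
next
  case (wsym u v) show ?case using wsym.IH by (rule wequiv.wsym)
next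
  case (wtrans u v w) then show ?case by (metis wequiv.wtrans)
next
  case (wrel r u v) then show ?case using wequiv.wrel[of n k r "x @ u" "v @ y"] by simp
qed

lemma wequiv_append: "wequiv n k u u' \<Longrightarrow> wequiv n k v v' \<Longrightarrow> wequiv n k (u @ v) (u' @ v')"
  using wequiv_context[of n k u u' "[]" v] wequiv_context[of n k v v' u' "[]"]
  by (simp add: wequiv.wtrans)

lemma wequiv_cancel_pair: "a \<in> {1..n} \<Longrightarrow> wequiv n k (x @ [a, a] @ y) (x @ y)"
  by (rule wequiv.wrel) (auto simp: relator_def)

lemma wequiv_rev_append_cancel: "gen_word n g \<Longrightarrow> wequiv n k (rev g @ g) []"
proof (induction g)
  case Nil then show ?case by (simp add: wequiv.wrefl)
next
  case (Cons a g)
  then have "a \<in> {1..n}" and "gen_word n g" by (auto simp: gen_word_def)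
  then show ?case
    using wequiv_cancel_pair[of a n k "rev g" g] Cons.IH by (auto intro: wequiv.wtrans)
qed

lemma wequiv_append_rev_cancel: "gen_word n g \<Longrightarrow> wequiv n k (g @ rev g) []"
  using wequiv_rev_append_cancel[of n "rev g" k] by (simp add: gen_word_def)

definition refl_prod :: "nat \<Rightarrow> nat \<Rightarrow> nat \<Rightarrow> nat list \<Rightarrow> bool" where
  "refl_prod n k m w \<longleftrightarrow>
     (\<exists>ts. length ts = m \<and> (\<forall>t\<in>set ts. refl_word n t) \<and> wequiv n k (concat ts) w)"

lemma refl_len_le: "refl_prod n k m w \<Longrightarrow> refl_len n k w \<le> m"
  unfolding refl_len_def refl_prod_def by (rule Least_le) auto

lemma refl_prod_wequiv: "refl_prod n k m u \<Longrightarrow> wequiv n k u v \<Longrightarrow> refl_prod n k m v"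
  unfolding refl_prod_def by (auto intro: wequiv.wtrans)

lemma refl_prod_length: "gen_word n w \<Longrightarrow> refl_prod n k (length w) w"
  unfolding refl_prod_def
proof (intro exI[of _ "map (\<lambda>i. [i]) w"] conjI)
  assume "gen_word n w"
  then show "\<forall>t\<in>set (map (\<lambda>i. [i]) w). refl_word n t"
    unfolding refl_word_def gen_word_def by (auto intro!: exI[of _ "[]"])
  have "concat (map (\<lambda>i. [i]) w) = w" by (induction w) auto
  then show "wequiv n k (concat (map (\<lambda>i. [i]) w)) w" by (simp add: wequiv.wrefl)
qed simp

lemma refl_prod_append:
  "refl_prod n k a u \<Longrightarrow> refl_prod n k b v \<Longrightarrow> refl_prod n k (a + b) (u @ v)"
  unfolding refl_prod_def
proof (elim exE conjE)
  fix ts1 ts2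
  assume "length ts1 = a" "\<forall>t\<in>set ts1. refl_word n t" "wequiv n k (concat ts1) u"
    and "length ts2 = b" "\<forall>t\<in>set ts2. refl_word n t" "wequiv n k (concat ts2) v"
  then show "\<exists>ts. length ts = a + b \<and> (\<forall>t\<in>set ts. refl_word n t) \<and> wequiv n k (concat ts) (u @ v)"
    by (intro exI[of _ "ts1 @ ts2"]) (auto intro: wequiv_append)
qed

lemma wequiv_concat_conj: "gen_word n g \<Longrightarrow>
  wequiv n k (concat (map (\<lambda>t. g @ t @ rev g) ts)) (g @ concat ts @ rev g)"
proof (induction ts)
  case Nil then show ?case using wequiv_append_rev_cancel[of n g k] by (simp add: wequiv.wsym)
next
  case (Cons t ts)
  have "wequiv n k ((g @ t @ rev g) @ concat (map (\<lambda>t. g @ t @ rev g) ts))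
          ((g @ t @ rev g) @ (g @ concat ts @ rev g))"
    using wequiv_context[OF Cons.IH[OF Cons.prems], of "g @ t @ rev g" "[]"] by simp
  moreover have "wequiv n k ((g @ t) @ (rev g @ g) @ (concat ts @ rev g))
                   ((g @ t) @ [] @ (concat ts @ rev g))"
    by (rule wequiv_context[OF wequiv_rev_append_cancel[OF Cons.prems]])
  ultimately show ?case by (auto intro: wequiv.wtrans)
qed

lemma refl_word_conj: "refl_word n t \<Longrightarrow> gen_word n g \<Longrightarrow> refl_word n (g @ t @ rev g)"
  unfolding refl_word_def gen_word_def
  by (elim exE conjE) (rule_tac x = "g @ w" in exI, auto)

lemma refl_prod_conj: "refl_prod n k m u \<Longrightarrow> gen_word n g \<Longrightarrow> refl_prod n k m (g @ u @ rev g)"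
  unfolding refl_prod_def
proof (elim exE conjE)
  fix ts assume ts: "length ts = m" "\<forall>t\<in>set ts. refl_word n t" "wequiv n k (concat ts) u"
    and g: "gen_word n g"
  have "wequiv n k (concat (map (\<lambda>t. g @ t @ rev g) ts)) (g @ u @ rev g)"
    using wequiv_concat_conj[OF g, of k ts] wequiv_context[OF ts(3), of g "rev g"]
    by (auto intro: wequiv.wtrans)
  with ts g show "\<exists>ts. length ts = m \<and> (\<forall>t\<in>set ts. refl_word n t) \<and> wequiv n k (concat ts) (g @ u @ rev g)"
    by (intro exI[of _ "map (\<lambda>t. g @ t @ rev g) ts"]) (auto intro: refl_word_conj)
qed

text \<open>The inserted letter c is paid for by the reflection x c x^{-1}.\<close>

lemma refl_prod_insert_letter:
  assumes "refl_prod n k m (x @ y)" and c: "c \<in> {1..n}" and x: "gen_word n x"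
  shows "refl_prod n k (m + 1) (x @ [c] @ y)"
proof -
  have "refl_prod n k 1 (x @ [c] @ rev x)" unfolding refl_prod_def refl_word_def using c x
    by (intro exI[of _ "[x @ [c] @ rev x]"]) (auto intro: wequiv.wrefl)
  from refl_prod_append[OF this assms(1)]
  have "refl_prod n k (1 + m) ((x @ [c]) @ (rev x @ x) @ y)" by simp
  moreover have "wequiv n k ((x @ [c]) @ (rev x @ x) @ y) ((x @ [c]) @ [] @ y)"
    by (rule wequiv_context[OF wequiv_rev_append_cancel[OF x]])
  ultimately show ?thesis by (auto dest: refl_prod_wequiv)
qed

lemma refl_prod_insert:
  "refl_prod n k m (x @ y) \<Longrightarrow> gen_word n z \<Longrightarrow> gen_word n x
    \<Longrightarrow> refl_prod n k (m + length z) (x @ z @ y)"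
proof (induction z arbitrary: m)
  case Nil then show ?case by simp
next
  case (Cons c z)
  then have "refl_prod n k (m + length z) (x @ z @ y)" by (auto simp: gen_word_def)
  with Cons.prems show ?case
    using refl_prod_insert_letter[of n k "m + length z" x "z @ y" c] by (auto simp: gen_word_def)
qed

lemma refl_prod_conj_append:
  assumes "refl_prod n k m X" and "a \<in> {1..n}" and "gen_word n Y"
  shows "refl_prod n k (m + length Y) ([a] @ X @ [a] @ Y)"
proof -
  have "refl_prod n k m ([a] @ X @ rev [a])"
    using assms by (intro refl_prod_conj) (auto simp: gen_word_def)
  from refl_prod_append[OF this refl_prod_length[OF assms(3)]] show ?thesis by simp
qed

lemma refl_prod_insert_periodic:
  "refl_prod n k m (pre @ concat (replicate j g) @ tail) \<Longrightarrow> gen_word n pre \<Longrightarrow>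
   gen_word n g \<Longrightarrow> gen_word n C \<Longrightarrow>
   refl_prod n k (m + j * length C) (pre @ concat (replicate j (g @ C)) @ tail)"
proof (induction j arbitrary: pre m)
  case 0 then show ?case by simp
next
  case (Suc j)
  have "refl_prod n k (m + j * length C) ((pre @ g) @ concat (replicate j (g @ C)) @ tail)"
    using Suc.IH[of m "pre @ g"] Suc.prems by (simp add: gen_word_def)
  from refl_prod_insert[OF this, of C] show ?case
    using Suc.prems by (simp add: gen_word_def add.commute add.left_commute)
qed

text \<open>The braid relation (a b)^k = 1 with k = k' + 2: the conjugator a b of X and the
  k' inner copies of a b cost nothing.\<close>

lemma refl_prod_braid:
  assumes X: "refl_prod n k m X" and k: "k = Suc (Suc k')"
    and a: "a \<in> {1..n}" and b: "b \<in> {1..n}" and "a \<noteq> b"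
    and C: "gen_word n C" and D: "gen_word n D"
  shows "refl_prod n k (m + k' * length C + length D)
           ([a, b] @ X @ concat (replicate k' ([a, b] @ C)) @ [a, b] @ D)"
proof -
  have ab: "gen_word n [a, b]" using a b by (simp add: gen_word_def)
  have "relator n k (concat (replicate k [a, b]))"
    unfolding relator_def using a b \<open>a \<noteq> b\<close> by blast
  from wequiv.wrel[OF this, of "[]" "[]"]
  have "wequiv n k [] (([a, b] @ concat (replicate k' [a, b]) @ [a, b]) @ [])"
    unfolding k by (simp add: replicate_append_same[symmetric] wequiv.wsym)
  then have "refl_prod n k 0 (([a, b] @ concat (replicate k' [a, b]) @ [a, b]) @ [])"
    unfolding refl_prod_def by auto
  from refl_prod_insert[OF this D] ab
  have "refl_prod n k (length D) ([a, b] @ concat (replicate k' [a, b]) @ [a, b] @ D)"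
    by (simp add: gen_word_def)
  from refl_prod_insert_periodic[of n k _ "[a, b]", OF this ab ab C]
  have braid: "refl_prod n k (length D + k' * length C)
                 ([a, b] @ concat (replicate k' ([a, b] @ C)) @ [a, b] @ D)" .
  from refl_prod_append[OF refl_prod_conj[OF X ab] braid]
  have "refl_prod n k (m + (length D + k' * length C))
          (([a, b] @ X @ [b]) @ [a, a] @ ([b] @ concat (replicate k' ([a, b] @ C)) @ [a, b] @ D))"
    by simp
  then have "refl_prod n k (m + (length D + k' * length C))
          (([a, b] @ X) @ [b, b] @ (concat (replicate k' ([a, b] @ C)) @ [a, b] @ D))"
    using refl_prod_wequiv wequiv_cancel_pair[OF a] by fastforce
  then show ?thesis
    using refl_prod_wequiv wequiv_cancel_pair[OF b] by (fastforce simp: ac_simps)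
qed

definition cyclic_word :: "nat \<Rightarrow> nat \<Rightarrow> nat \<Rightarrow> nat list" where
  "cyclic_word n p l = map (\<lambda>j. (p + j) mod n + 1) [0..<l]"

lemma length_cyclic_word [simp]: "length (cyclic_word n p l) = l"
  by (simp add: cyclic_word_def)

lemma gen_word_cyclic_word: "n > 0 \<Longrightarrow> gen_word n (cyclic_word n p l)"
  unfolding cyclic_word_def gen_word_def by (auto simp: Suc_le_eq)

lemma cyclic_word_add: "cyclic_word n p (a + b) = cyclic_word n p a @ cyclic_word n (p + a) b"
proof -
  have "[0..<a + b] = [0..<a] @ map (\<lambda>j. j + a) [0..<b]"
    using upt_add_eq_append[of 0 a b] map_add_upt[of a b] by (simp add: add.commute)
  then show ?thesis unfolding cyclic_word_def by (simp add: add.assoc add.commute[of a])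
qed

lemma cyclic_word_shift: "cyclic_word n (p + c * n) l = cyclic_word n p l"
proof -
  have "(p + c * n + j) mod n = (p + j) mod n" for j
    by (metis add.assoc add.commute mod_mult_self1)
  then show ?thesis by (simp add: cyclic_word_def)
qed

lemma cyclic_word_one: "cyclic_word n p 1 = [p mod n + 1]"
  by (simp add: cyclic_word_def)

lemma cyclic_word_two: "cyclic_word n p 2 = [p mod n + 1, Suc p mod n + 1]"
  by (simp add: cyclic_word_def numeral_2_eq_2)

lemma cyclic_word_periods: "cyclic_word n p (j * n) = concat (replicate j (cyclic_word n p n))"
proof (induction j)
  case 0 then show ?case by (simp add: cyclic_word_def)
next
  case (Suc j)
  have "cyclic_word n p (Suc j * n) = cyclic_word n p n @ cyclic_word n (p + 1 * n) (j * n)"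
    by (simp add: cyclic_word_add[symmetric])
  with Suc show ?case by (simp only: cyclic_word_shift) simp
qed

lemma cyclic_word_initial: "r \<le> n \<Longrightarrow> cyclic_word n 0 r = [1..<r + 1]"
proof -
  assume "r \<le> n"
  then have "cyclic_word n 0 r = map Suc [0..<r]" unfolding cyclic_word_def by (intro map_cong) auto
  then show ?thesis by (simp add: map_Suc_upt)
qed

lemma cyclic_word_eq_power_prefix:
  "r \<le> n \<Longrightarrow> concat (replicate lam [1..<n + 1]) @ [1..<r + 1] = cyclic_word n 0 (lam * n + r)"
  using cyclic_word_add[of n 0 "lam * n" r] cyclic_word_shift[of n 0 lam r]
    cyclic_word_periods[of n 0 lam] cyclic_word_initial[of n n] cyclic_word_initial[of r n]
  by simp

lemma cyclic_word_conj_split: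
  assumes "1 \<le> r" "r \<le> n"
  shows "cyclic_word n p (Suc l * n + r)
    = [p mod n + 1] @ cyclic_word n (p + 1) (l * n + (n - 1)) @ [p mod n + 1]
      @ cyclic_word n (p + 1) (r - 1)"
proof -
  have len: "Suc l * n + r = 1 + (l * n + (n - 1)) + 1 + (r - 1)" using assms by simp
  have "p + (1 + (l * n + (n - 1))) = p + Suc l * n"
       "p + (1 + (l * n + (n - 1)) + 1) = (p + 1) + Suc l * n" using assms by simp_all
  then show ?thesis
    by (simp only: len cyclic_word_add append_assoc cyclic_word_shift cyclic_word_one mod_mult_self1)
qed

lemma cyclic_word_braid_split:
  assumes "2 \<le> r" "r \<le> n"
  shows "cyclic_word n p (Suc (d + k') * n + r)
    = [p mod n + 1, Suc p mod n + 1] @ cyclic_word n (p + 2) (d * n + (n - 2))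
      @ concat (replicate k' ([p mod n + 1, Suc p mod n + 1] @ cyclic_word n (p + 2) (n - 2)))
      @ [p mod n + 1, Suc p mod n + 1] @ cyclic_word n (p + 2) (r - 2)"
proof -
  have pref: "cyclic_word n p (2 + q) = [p mod n + 1, Suc p mod n + 1] @ cyclic_word n (p + 2) q"
    for q by (simp only: cyclic_word_add cyclic_word_two)
  have two: "2 + (n - 2) = n" "2 + (r - 2) = r" using assms by simp_all
  have len: "Suc (d + k') * n + r = 2 + (d * n + (n - 2)) + (k' * n + r)" using assms
    by (simp add: algebra_simps)
  have "p + (2 + (d * n + (n - 2))) = p + Suc d * n" using assms by simp
  then have "cyclic_word n p (Suc (d + k') * n + r)
      = cyclic_word n p 2 @ cyclic_word n (p + 2) (d * n + (n - 2)) @ cyclic_word n p (k' * n + r)"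
    by (simp only: len cyclic_word_add append_assoc cyclic_word_shift)
  moreover have "cyclic_word n p (k' * n + r)
      = concat (replicate k' (cyclic_word n p n)) @ cyclic_word n p r"
    using cyclic_word_add[of n p "k' * n" r] cyclic_word_periods[of n p k']
      cyclic_word_shift[of n p k' r] by simp
  ultimately show ?thesis
    using pref[of "n - 2"] pref[of "r - 2"] by (simp only: two cyclic_word_two)
qed

definition saving :: "nat \<Rightarrow> nat \<Rightarrow> nat \<Rightarrow> int" where
  "saving k lam r = (let e = (if r \<ge> 2 then 1 else 0) :: int in
                     (if int lam + e \<ge> int k then 1 else 0)
                     * (1 + (int lam - int k + e) div (int k - 1)))"

lemma saving_0: "k \<ge> 2 \<Longrightarrow> saving k 0 r = 0"
  by (simp add: saving_def)

lemma saving_nonneg: "k \<ge> 2 \<Longrightarrow> saving k lam r \<ge> 0"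
  by (simp add: saving_def Let_def pos_imp_zdiv_nonneg_iff)

lemma saving_le_saving_Suc:
  assumes "k \<ge> 2" "r = 1 \<or> Suc l + 1 < k" "r' \<ge> 2"
  shows "saving k (Suc l) r \<le> saving k l r'"
  using assms(2)
proof
  assume "r = 1"
  with assms(3) have "saving k (Suc l) r = saving k l r'"
    by (simp add: saving_def Let_def add_diff_eq add.commute)
  then show ?thesis by simp
next
  assume "Suc l + 1 < k"
  then show ?thesis using saving_nonneg[OF assms(1), of l r'] by (simp add: saving_def)
qed

lemma saving_Suc_braid:
  assumes k: "k = Suc (Suc k')" and "r \<ge> 2" "r' \<ge> 2"
  shows "saving k (Suc (d + k')) r = 1 + saving k d r'"
proof -
  have "int d div (int k' + 1)
      = (if int k' + 1 \<le> int d then 1 + (int d - (int k' + 1)) div (int k' + 1) else 0)"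
    by (simp add: div_pos_geq)
  then show ?thesis using assms by (simp add: saving_def Let_def algebra_simps)
qed

lemma cyclic_word_refl_prod:
  assumes n: "n \<ge> 4" and k: "k \<ge> 2" and r: "1 \<le> r" "r \<le> n"
  shows "\<exists>m. refl_prod n k m (cyclic_word n p (lam * n + r))
               \<and> int m \<le> int lam * (int n - 2) + int r - 2 * saving k lam r"
  using r
proof (induction lam arbitrary: r p rule: less_induct)
  case (less lam)
  have n0: "n > 0" and a: "p mod n + 1 \<in> {1..n}" using n by (auto simp: Suc_le_eq)
  show ?case
  proof (cases lam)
    case 0
    then show ?thesis using refl_prod_length[OF gen_word_cyclic_word[OF n0], of k p r]
      by (intro exI[of _ r]) (simp add: saving_0[OF k])
  next
    case (Suc l)
    show ?thesis
    proof (cases "r = 1 \<or> lam + 1 < k")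
      case True
      have "\<exists>m. refl_prod n k m (cyclic_word n (p + 1) (l * n + (n - 1)))
          \<and> int m \<le> int l * (int n - 2) + int (n - 1) - 2 * saving k l (n - 1)"
        using less.IH[of l "n - 1" "p + 1"] Suc n by simp
      then obtain m where m: "refl_prod n k m (cyclic_word n (p + 1) (l * n + (n - 1)))"
        "int m \<le> int l * (int n - 2) + int (n - 1) - 2 * saving k l (n - 1)" by blast
      from refl_prod_conj_append[OF m(1) a gen_word_cyclic_word[OF n0], of "p + 1" "r - 1"]
      have "refl_prod n k (m + (r - 1)) (cyclic_word n p (lam * n + r))"
        unfolding Suc cyclic_word_conj_split[OF less.prems] length_cyclic_word .
      moreover have "saving k lam r \<le> saving k l (n - 1)"
        using saving_le_saving_Suc[of k r l "n - 1"] True Suc k n by simp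
      moreover have "int lam * (int n - 2) = int l * (int n - 2) + int n - 2"
        using Suc by (simp add: algebra_simps)
      ultimately show ?thesis using m(2) less.prems n
        by (intro exI[of _ "m + (r - 1)"]) (simp add: of_nat_diff)
    next
      case False
      then have r2: "r \<ge> 2" and "lam + 1 \<ge> k" using less.prems by auto
      then obtain k' d where k': "k = Suc (Suc k')" and d: "lam = Suc (d + k')"
        using k by (intro that[of "k - 2" "lam + 1 - k"]) auto
      have b: "Suc p mod n + 1 \<in> {1..n}" using n0 by (simp add: Suc_le_eq)
      have ab: "p mod n + 1 \<noteq> Suc p mod n + 1" using n by (auto simp: mod_Suc)
      have "\<exists>m. refl_prod n k m (cyclic_word n (p + 2) (d * n + (n - 2)))
          \<and> int m \<le> int d * (int n - 2) + int (n - 2) - 2 * saving k d (n - 2)"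
        using less.IH[of d "n - 2" "p + 2"] d n by simp
      then obtain m where m: "refl_prod n k m (cyclic_word n (p + 2) (d * n + (n - 2)))"
        "int m \<le> int d * (int n - 2) + int (n - 2) - 2 * saving k d (n - 2)" by blast
      from refl_prod_braid[OF m(1) k' a b ab gen_word_cyclic_word[OF n0] gen_word_cyclic_word[OF n0]]
      have "refl_prod n k (m + k' * (n - 2) + (r - 2)) (cyclic_word n p (lam * n + r))"
        unfolding d cyclic_word_braid_split[OF r2 less.prems(2)] length_cyclic_word .
      moreover have "saving k lam r = 1 + saving k d (n - 2)"
        using saving_Suc_braid[OF k' r2, of "n - 2" d] d n by simp
      moreover have "int lam * (int n - 2) = int d * (int n - 2) + (int n - 2) + int k' * (int n - 2)"
        using d by (simp add: algebra_simps)
      ultimately show ?thesis using m(2) r2 n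
        by (intro exI[of _ "m + k' * (n - 2) + (r - 2)"]) (simp add: of_nat_diff)
    qed
  qed
qed

theorem mainTheorem14:
  fixes n k lam r :: nat
  assumes "n \<ge> 4" and "k \<ge> 3" and "1 \<le> r" and "r \<le> n"
  shows "int (refl_len n k (concat (replicate lam [1..<n+1]) @ [1..<r+1]))
     \<le> int lam * (int n - 2) + int r
        - 2 * (let e = (if r \<ge> 2 then 1 else 0) :: int in
               (if int lam + e \<ge> int k then 1 else 0)
               * (1 + (int lam - int k + e) div (int k - 1)))"
proof -
  obtain m where "refl_prod n k m (cyclic_word n 0 (lam * n + r))"
    and m: "int m \<le> int lam * (int n - 2) + int r - 2 * saving k lam r"
    using cyclic_word_refl_prod[of n k r] assms by auto
  then have "refl_len n k (concat (replicate lam [1..<n+1]) @ [1..<r+1]) \<le> m"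
    using refl_len_le cyclic_word_eq_power_prefix[OF assms(4)] by simp
  with m show ?thesis unfolding saving_def by simp
qed

end
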